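(* Let $G$ be a connected simple graph with at least $2$ vertices and let $v\in V(G)$. Then $$\chi_{dom}(G)-\deg v+1\leq \chi_{dom}(G\odot v)\leq \chi_{dom}(G)+1.$$
   Context: All graphs are finite and simple. A dominated coloring of a graph $H$ is a proper vertex coloring of $H$ such that for every color class $C$ there is a vertex $x\in V(H)$ adjacent to every vertex of $C$. The dominated chromatic number $\chi_{dom}(H)$ is the minimum number of colors in a dominated coloring of $H$. $G\odot v$ denotes the graph obtained from $G$ by removing every edge joining two neighbours of $v$ ($v$ itself and all other edges are kept). $\deg v$ is the degree of $v$ in $G$. *)

theory Defs
  imports Main
begin

definition simple_graph :: "'a set \<Rightarrow> ('a \<Rightarrow> 'a \<Rightarrow> bool) \<Rightarrow> bool" where
  "simple_graph V E \<longleftrightarrow> finite V \<and> (\<forall>x y. E x y \<longrightarrow> x \<in> V \<and> y \<in> V)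
     \<and> (\<forall>x y. E x y \<longrightarrow> E y x) \<and> (\<forall>x. \<not> E x x)"

definition connected_graph :: "'a set \<Rightarrow> ('a \<Rightarrow> 'a \<Rightarrow> bool) \<Rightarrow> bool" where
  "connected_graph V E \<longleftrightarrow> (\<forall>x\<in>V. \<forall>y\<in>V. E\<^sup>*\<^sup>* x y)"

definition degree :: "'a set \<Rightarrow> ('a \<Rightarrow> 'a \<Rightarrow> bool) \<Rightarrow> 'a \<Rightarrow> nat" where
  "degree V E v = card {u\<in>V. E v u}"

definition dominated_coloring :: "'a set \<Rightarrow> ('a \<Rightarrow> 'a \<Rightarrow> bool) \<Rightarrow> ('a \<Rightarrow> nat) \<Rightarrow> bool" where
  "dominated_coloring V E c \<longleftrightarrow>
     (\<forall>x\<in>V. \<forall>y\<in>V. E x y \<longrightarrow> c x \<noteq> c y) \<and>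
     (\<forall>i\<in>c ` V. \<exists>x\<in>V. \<forall>y\<in>V. c y = i \<longrightarrow> E x y)"

definition chi_dom :: "'a set \<Rightarrow> ('a \<Rightarrow> 'a \<Rightarrow> bool) \<Rightarrow> nat" where
  "chi_dom V E = (LEAST k. \<exists>c. dominated_coloring V E c \<and> card (c ` V) = k)"

definition odot :: "('a \<Rightarrow> 'a \<Rightarrow> bool) \<Rightarrow> 'a \<Rightarrow> ('a \<Rightarrow> 'a \<Rightarrow> bool)" where
  "odot E v = (\<lambda>x y. E x y \<and> \<not> (E v x \<and> E v y))"

end

theory Submission
  imports Defs
begin

text \<open>Upper bound: give all neighbours of v one fresh colour; in G \<odot> v they form an independent
  set dominated by v. Lower bound: pick a neighbour u of v and give the other deg v - 1
  neighbours pairwise distinct fresh colours, each class dominated by v. Every edge of G missing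
  from G \<odot> v joins two neighbours of v, so at least one endpoint is recoloured and the colouring
  becomes proper in G; the old classes only shrink and keep their dominators, since G \<odot> v is a
  subgraph of G.\<close>

lemma chi_dom_le: "dominated_coloring V E c \<Longrightarrow> chi_dom V E \<le> card (c ` V)"
  unfolding chi_dom_def by (rule Least_le) blast

lemma chi_dom_attained:
  assumes "dominated_coloring V E c"
  obtains c' where "dominated_coloring V E c'" "card (c' ` V) = chi_dom V E"
proof -
  have "\<exists>c'. dominated_coloring V E c' \<and> card (c' ` V) = chi_dom V E"
    unfolding chi_dom_def by (rule LeastI_ex) (use assms in blast)
  with that show thesis by blast
qed

lemma less_Suc_Max_image: "finite V \<Longrightarrow> y \<in> V \<Longrightarrow> c y < Suc (Max (c ` V))"
  by (simp add: le_imp_less_Suc)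

lemma simple_graph_odot: "simple_graph V E \<Longrightarrow> simple_graph V (odot E v)"
  by (auto simp: simple_graph_def odot_def)

lemma dominated_coloring_inj_on:
  assumes "simple_graph V E" "\<And>y. y \<in> V \<Longrightarrow> \<exists>x\<in>V. E x y" "inj_on c V"
  shows "dominated_coloring V E c"
  unfolding dominated_coloring_def
proof (intro conjI ballI impI)
  fix x y assume "x \<in> V" "y \<in> V" "E x y"
  with assms(1) have "x \<noteq> y" by (auto simp: simple_graph_def)
  with assms(3) \<open>x \<in> V\<close> \<open>y \<in> V\<close> show "c x \<noteq> c y" by (simp add: inj_on_eq_iff)
next
  fix i assume "i \<in> c ` V"
  then obtain y where "y \<in> V" "i = c y" by blast
  with assms(2,3) show "\<exists>x\<in>V. \<forall>y\<in>V. c y = i \<longrightarrow> E x y" by (auto simp: inj_on_eq_iff)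
qed

lemma ex_dominated_coloring:
  assumes "simple_graph V E" "\<And>y. y \<in> V \<Longrightarrow> \<exists>x\<in>V. E x y"
  shows "\<exists>c. dominated_coloring V E c"
proof -
  from assms(1) have "finite V" by (simp add: simple_graph_def)
  then obtain c :: "'a \<Rightarrow> nat" where "inj_on c V"
    using finite_imp_inj_to_nat_seg by blast
  with assms show ?thesis using dominated_coloring_inj_on by blast
qed

lemma connected_graph_neighbour:
  assumes "simple_graph V E" "connected_graph V E" "card V \<ge> 2" "y \<in> V"
  shows "\<exists>x\<in>V. E x y"
proof -
  have "V \<noteq> {y}" using assms(3) by auto
  with assms(4) obtain z where "z \<in> V" "z \<noteq> y" by blast
  with assms(2,4) have "E\<^sup>*\<^sup>* y z" "z \<noteq> y" by (simp_all add: connected_graph_def)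
  then obtain x where "E y x" by (cases rule: converse_rtranclpE) auto
  with assms(1) show ?thesis unfolding simple_graph_def by blast
qed

lemma odot_neighbour:
  assumes sg: "simple_graph V E" and nb: "\<And>y. y \<in> V \<Longrightarrow> \<exists>x\<in>V. E x y"
    and "v \<in> V" "y \<in> V"
  shows "\<exists>x\<in>V. odot E v x y"
proof (cases "y = v \<or> E v y")
  case True
  have irr: "\<not> E x x" for x using sg by (simp add: simple_graph_def)
  show ?thesis
  proof (cases "y = v")
    case True
    then obtain x where "x \<in> V" "E x v" using nb \<open>y \<in> V\<close> by blast
    with irr True show ?thesis by (auto simp: odot_def)
  next
    case False
    with \<open>y = v \<or> E v y\<close> irr \<open>v \<in> V\<close> show ?thesis by (auto simp: odot_def)
  qed
next
  case False
  then obtain x where "x \<in> V" "E x y" using nb \<open>y \<in> V\<close> by blast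
  with False show ?thesis by (auto simp: odot_def)
qed

lemma card_image_if_le:
  assumes "finite V"
  shows "card ((\<lambda>y. if P y then f y else c y) ` V) \<le> card (c ` V) + card (f ` {y\<in>V. P y})"
proof -
  have "(\<lambda>y. if P y then f y else c y) ` V \<subseteq> c ` V \<union> f ` {y\<in>V. P y}" by auto
  then have "card ((\<lambda>y. if P y then f y else c y) ` V) \<le> card (c ` V \<union> f ` {y\<in>V. P y})"
    by (simp add: card_mono assms)
  also have "\<dots> \<le> card (c ` V) + card (f ` {y\<in>V. P y})" by (rule card_Un_le)
  finally show ?thesis .
qed

lemma dominated_coloring_odot_merge_neighbours:
  assumes sg: "simple_graph V E" and dc: "dominated_coloring V E c"
    and fresh: "\<And>y. y \<in> V \<Longrightarrow> c y < M"
  shows "dominated_coloring V (odot E v) (\<lambda>y. if E v y then M else c y)"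
    (is "dominated_coloring V _ ?c'")
  unfolding dominated_coloring_def
proof (intro conjI ballI impI)
  fix x y assume xy: "x \<in> V" "y \<in> V" "odot E v x y"
  with dc fresh[OF xy(1)] fresh[OF xy(2)] show "?c' x \<noteq> ?c' y"
    by (cases "E v x \<or> E v y") (auto simp: odot_def dominated_coloring_def)
next
  fix i assume "i \<in> ?c' ` V"
  then obtain y0 where y0: "y0 \<in> V" "i = ?c' y0" by blast
  show "\<exists>x\<in>V. \<forall>y\<in>V. ?c' y = i \<longrightarrow> odot E v x y"
  proof (cases "E v y0")
    case True
    with sg have "v \<in> V" "\<not> E v v" by (auto simp: simple_graph_def)
    have "\<forall>y\<in>V. ?c' y = i \<longrightarrow> odot E v v y"
    proof (intro ballI impI)
      fix y assume "y \<in> V" "?c' y = i"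
      with fresh[OF this(1)] True y0 \<open>\<not> E v v\<close> show "odot E v v y"
        by (auto simp: odot_def split: if_splits)
    qed
    with \<open>v \<in> V\<close> show ?thesis by blast
  next
    case False
    then obtain x where "x \<in> V" "\<forall>y\<in>V. c y = i \<longrightarrow> E x y"
      using dc y0 by (auto simp: dominated_coloring_def)
    with False y0 fresh[OF y0(1)] show ?thesis by (auto simp: odot_def)
  qed
qed

lemma dominated_coloring_split_neighbours:
  assumes sg: "simple_graph V E" and dc: "dominated_coloring V (odot E v) c"
    and fresh: "\<And>y. y \<in> V \<Longrightarrow> c y < M"
    and S: "S = {w\<in>V. E v w \<and> w \<noteq> u}" and g: "inj_on g S"
  shows "dominated_coloring V E (\<lambda>y. if y \<in> S then M + g y else c y)"
    (is "dominated_coloring V E ?c'")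
proof -
  have same_class: "y \<in> S \<longleftrightarrow> y0 \<in> S" if "?c' y = ?c' y0" "y \<in> V" "y0 \<in> V" for y y0
    using that fresh[OF that(2)] fresh[OF that(3)] by (auto split: if_splits)
  show ?thesis
    unfolding dominated_coloring_def
  proof (intro conjI ballI impI)
    fix x y assume xy: "x \<in> V" "y \<in> V" "E x y"
    with sg have "x \<noteq> y" by (auto simp: simple_graph_def)
    show "?c' x \<noteq> ?c' y"
    proof (cases "x \<in> S \<or> y \<in> S")
      case True
      show ?thesis
      proof
        assume eq: "?c' x = ?c' y"
        with True same_class[OF eq xy(1,2)] have "x \<in> S" "y \<in> S" by blast+
        with eq g \<open>x \<noteq> y\<close> show False by (simp add: inj_on_def)
      qed
    next
      case False
      with xy \<open>x \<noteq> y\<close> have "odot E v x y" by (auto simp: S odot_def)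
      with False dc xy show ?thesis by (auto simp: dominated_coloring_def)
    qed
  next
    fix i assume "i \<in> ?c' ` V"
    then obtain y0 where y0: "y0 \<in> V" "i = ?c' y0" by blast
    show "\<exists>x\<in>V. \<forall>y\<in>V. ?c' y = i \<longrightarrow> E x y"
    proof (cases "y0 \<in> S")
      case True
      have "\<forall>y\<in>V. ?c' y = i \<longrightarrow> E v y"
      proof (intro ballI impI)
        fix y assume "y \<in> V" "?c' y = i"
        with True y0 same_class[of y y0] show "E v y" by (simp add: S)
      qed
      moreover from sg True have "v \<in> V" by (auto simp: S simple_graph_def)
      ultimately show ?thesis by blast
    next
      case False
      then obtain x where "x \<in> V" "\<forall>y\<in>V. c y = i \<longrightarrow> odot E v x y"
        using dc y0 by (auto simp: dominated_coloring_def)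
      moreover have "\<forall>y\<in>V. ?c' y = i \<longrightarrow> c y = i \<and> y \<notin> S"
      proof (intro ballI impI)
        fix y assume "y \<in> V" "?c' y = i"
        with False y0 same_class[of y y0] show "c y = i \<and> y \<notin> S" by simp
      qed
      ultimately show ?thesis unfolding odot_def by blast
    qed
  qed
qed

lemma degree_remove_neighbour:
  assumes "finite V" "u \<in> V" "E v u"
  shows "degree V E v = Suc (card {w\<in>V. E v w \<and> w \<noteq> u})"
proof -
  have "{w\<in>V. E v w} = insert u {w\<in>V. E v w \<and> w \<noteq> u}" using assms(2,3) by auto
  then show ?thesis using assms(1) by (simp add: degree_def)
qed

lemma chi_dom_odot_le:
  assumes sg: "simple_graph V E" and "\<exists>c. dominated_coloring V E c"
  shows "chi_dom V (odot E v) \<le> chi_dom V E + 1"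
proof -
  have fin: "finite V" using sg by (simp add: simple_graph_def)
  obtain c where c: "dominated_coloring V E c" "card (c ` V) = chi_dom V E"
    using assms(2) chi_dom_attained by blast
  define M where "M = Suc (Max (c ` V))"
  have fresh: "y \<in> V \<Longrightarrow> c y < M" for y unfolding M_def using less_Suc_Max_image[OF fin] .
  have "chi_dom V (odot E v) \<le> card ((\<lambda>y. if E v y then M else c y) ` V)"
    using chi_dom_le dominated_coloring_odot_merge_neighbours[OF sg c(1) fresh] .
  also have "\<dots> \<le> card (c ` V) + card ((\<lambda>_. M) ` {y\<in>V. E v y})"
    using card_image_if_le[OF fin] .
  also have "\<dots> \<le> chi_dom V E + 1" using c(2) by (simp add: image_constant_conv)
  finally show ?thesis .
qed

lemma chi_dom_le_odot_plus_degree: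
  assumes sg: "simple_graph V E" and "\<exists>c. dominated_coloring V (odot E v) c"
    and u: "u \<in> V" "E v u"
  shows "chi_dom V E + 1 \<le> chi_dom V (odot E v) + degree V E v"
proof -
  have fin: "finite V" using sg by (simp add: simple_graph_def)
  obtain c where c: "dominated_coloring V (odot E v) c" "card (c ` V) = chi_dom V (odot E v)"
    using assms(2) chi_dom_attained by blast
  define S where "S = {w\<in>V. E v w \<and> w \<noteq> u}"
  have finS: "finite S" using fin by (simp add: S_def)
  obtain g :: "'a \<Rightarrow> nat" where g: "inj_on g S"
    using finite_imp_inj_to_nat_seg[OF finS] by blast
  define M where "M = Suc (Max (c ` V))"
  have fresh: "y \<in> V \<Longrightarrow> c y < M" for y unfolding M_def using less_Suc_Max_image[OF fin] .
  have "chi_dom V E \<le> card ((\<lambda>y. if y \<in> S then M + g y else c y) ` V)"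
    using chi_dom_le dominated_coloring_split_neighbours[OF sg c(1) fresh S_def g] .
  also have "\<dots> \<le> card (c ` V) + card ((\<lambda>y. M + g y) ` {y\<in>V. y \<in> S})"
    using card_image_if_le[OF fin] .
  also have "\<dots> \<le> card (c ` V) + card S"
    using card_image_le[OF finS, of "\<lambda>y. M + g y"] by (simp add: S_def)
  finally show ?thesis
    using c(2) degree_remove_neighbour[where E = E and v = v, OF fin u] by (simp add: S_def)
qed

theorem theorem3p6:
  fixes V :: "'a set" and E :: "'a \<Rightarrow> 'a \<Rightarrow> bool" and v :: 'a
  assumes "simple_graph V E" and "connected_graph V E" and "card V \<ge> 2" and "v \<in> V"
  shows "int (chi_dom V E) - int (degree V E v) + 1 \<le> int (chi_dom V (odot E v)) \<and>
         chi_dom V (odot E v) \<le> chi_dom V E + 1"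
proof -
  have nb: "\<And>y. y \<in> V \<Longrightarrow> \<exists>x\<in>V. E x y"
    using connected_graph_neighbour[OF assms(1-3)] .
  then obtain u where "u \<in> V" "E u v" using assms(4) by blast
  with assms(1) have u: "u \<in> V" "E v u" by (simp_all add: simple_graph_def)
  have "chi_dom V (odot E v) \<le> chi_dom V E + 1"
    using chi_dom_odot_le[OF assms(1) ex_dominated_coloring[OF assms(1) nb]] .
  moreover have "chi_dom V E + 1 \<le> chi_dom V (odot E v) + degree V E v"
    using chi_dom_le_odot_plus_degree[OF assms(1) _ u] odot_neighbour[OF assms(1) nb assms(4)]
      ex_dominated_coloring[OF simple_graph_odot[OF assms(1)]] by blast
  ultimately show ?thesis by simp
qed

end
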